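(* Let $1\le i,j,a\le n$ with $i<j$. Then in ${\boldsymbol U}_{v}(\mathfrak q_n)$: \[ \mathsf K_{\bar a}\mathsf E_{i,j}=\begin{cases}\mathsf E_{i,j}\mathsf K_{\bar a} & (a<i\text{ or } i<a<j\text{ or }a>j),\\ v\mathsf E_{i,j}\mathsf K_{\bar i}-\mathsf E_{\bar i}\mathsf E_{i+1,j}\mathsf K_i^{-1}+v^{-1}\mathsf E_{i+1,j}\mathsf E_{\bar i}\mathsf K_i^{-1} & (a=i,\ j>i+1),\\ v^{-1}\mathsf E_{i,j}\mathsf K_{\bar j}-\overline{\mathsf E}_{i,j}\mathsf K_j^{-1} & (a=j);\end{cases} \] \[ \mathsf K_{\bar a}\overline{\mathsf E}_{i,j}=\begin{cases}-\overline{\mathsf E}_{i,j}\mathsf K_{\bar a} & (a<i\text{ or } i<a<j\text{ or }a>j),\\ -v\overline{\mathsf E}_{i,j}\mathsf K_{\bar i}-\mathsf E_{\bar i}\overline{\mathsf E}_{i+1,j}\mathsf K_i^{-1}-v^{-1}\overline{\mathsf E}_{i+1,j}\mathsf E_{\bar i}\mathsf K_i^{-1} & (a=i,\ j>i+1),\\ -v^{-1}\overline{\mathsf E}_{i,j}\mathsf K_{\bar j}+\mathsf E_{i,j}\mathsf K_j^{-1} & (a=j).\end{cases} \]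
   Context: Let $v$ be an indeterminate. The quantum queer superalgebra ${\boldsymbol U}_{v}(\mathfrak q_n)$ is the associative superalgebra over $\mathbb Q(v)$ generated by even generators $\mathsf K_i,\mathsf K_i^{-1}$ ($1\le i\le n$), $\mathsf E_j,\mathsf F_j$ ($1\le j\le n-1$) and odd generators $\mathsf K_{\bar i}$ ($1\le i\le n$), $\mathsf E_{\bar j},\mathsf F_{\bar j}$ ($1\le j\le n-1$), subject to the following relations (indices are taken only where they make sense), where $(\epsilon_i,\alpha_j)=\delta_{i,j}-\delta_{i,j+1}$: (QQ1) $\mathsf K_i\mathsf K_i^{-1}=\mathsf K_i^{-1}\mathsf K_i=1$, $\mathsf K_i\mathsf K_j=\mathsf K_j\mathsf K_i$, $\mathsf K_i\mathsf K_{\bar j}=\mathsf K_{\bar j}\mathsf K_i$, $\mathsf K_{\bar i}\mathsf K_{\bar j}+\mathsf K_{\bar j}\mathsf K_{\bar i}=2\delta_{i,j}\frac{\mathsf K_i^2-\mathsf K_i^{-2}}{v^2-v^{-2}}$. (QQ2) $\mathsf K_i\mathsf E_j=v^{(\epsilon_i,\alpha_j)}\mathsf E_j\mathsf K_i$, $\mathsf K_i\mathsf E_{\bar j}=v^{(\epsilon_i,\alpha_j)}\mathsf E_{\bar j}\mathsf K_i$, $\mathsf K_i\mathsf F_j=v^{-(\epsilon_i,\alpha_j)}\mathsf F_j\mathsf K_i$, $\mathsf K_i\mathsf F_{\bar j}=v^{-(\epsilon_i,\alpha_j)}\mathsf F_{\bar j}\mathsf K_i$. (QQ3) $\mathsf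 K_{\bar i}\mathsf E_i-v\mathsf E_i\mathsf K_{\bar i}=\mathsf E_{\bar i}\mathsf K_i^{-1}$, $v\mathsf K_{\bar i}\mathsf E_{i-1}-\mathsf E_{i-1}\mathsf K_{\bar i}=-\mathsf K_i^{-1}\mathsf E_{\overline{i-1}}$, $\mathsf K_{\bar i}\mathsf F_i-v\mathsf F_i\mathsf K_{\bar i}=-\mathsf F_{\bar i}\mathsf K_i$, $v\mathsf K_{\bar i}\mathsf F_{i-1}-\mathsf F_{i-1}\mathsf K_{\bar i}=\mathsf K_i\mathsf F_{\overline{i-1}}$, $\mathsf K_{\bar i}\mathsf E_{\bar i}+v\mathsf E_{\bar i}\mathsf K_{\bar i}=\mathsf E_i\mathsf K_i^{-1}$, $v\mathsf K_{\bar i}\mathsf E_{\overline{i-1}}+\mathsf E_{\overline{i-1}}\mathsf K_{\bar i}=\mathsf K_i^{-1}\mathsf E_{i-1}$, $\mathsf K_{\bar i}\mathsf F_{\bar i}+v\mathsf F_{\bar i}\mathsf K_{\bar i}=\mathsf F_i\mathsf K_i$, $v\mathsf K_{\bar i}\mathsf F_{\overline{i-1}}+\mathsf F_{\overline{i-1}}\mathsf K_{\bar i}=\mathsf K_i\mathsf F_{i-1}$, and for $j\ne i,i-1$: $\mathsf K_{\bar i}\mathsf E_j=\mathsf E_j\mathsf K_{\bar i}$, $\mathsf K_{\bar i}\mathsf F_j=\mathsf F_j\mathsf K_{\bar i}$, $\mathsf K_{\bar i}\mathsf E_{\bar j}=-\mathsf E_{\bar j}\mathsf K_{\bar i}$,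 $\mathsf K_{\bar i}\mathsf F_{\bar j}=-\mathsf F_{\bar j}\mathsf K_{\bar i}$. (QQ4) $\mathsf E_i\mathsf F_j-\mathsf F_j\mathsf E_i=\delta_{i,j}\frac{\mathsf K_i\mathsf K_{i+1}^{-1}-\mathsf K_i^{-1}\mathsf K_{i+1}}{v-v^{-1}}$, $\mathsf E_{\bar i}\mathsf F_{\bar j}+\mathsf F_{\bar j}\mathsf E_{\bar i}=\delta_{i,j}\big(\frac{\mathsf K_i\mathsf K_{i+1}-\mathsf K_i^{-1}\mathsf K_{i+1}^{-1}}{v-v^{-1}}+(v-v^{-1})\mathsf K_{\bar i}\mathsf K_{\overline{i+1}}\big)$, $\mathsf E_i\mathsf F_{\bar j}-\mathsf F_{\bar j}\mathsf E_i=\delta_{i,j}(\mathsf K_{i+1}^{-1}\mathsf K_{\bar i}-\mathsf K_{\overline{i+1}}\mathsf K_i^{-1})$, $\mathsf E_{\bar i}\mathsf F_j-\mathsf F_j\mathsf E_{\bar i}=\delta_{i,j}(\mathsf K_{i+1}\mathsf K_{\bar i}-\mathsf K_{\overline{i+1}}\mathsf K_i)$. (QQ5) $\mathsf E_{\bar i}^2=-\frac{v-v^{-1}}{v+v^{-1}}\mathsf E_i^2$, $\mathsf F_{\bar i}^2=\frac{v-v^{-1}}{v+v^{-1}}\mathsf F_i^2$; for $|i-j|\ne1$: $\mathsf E_i\mathsf E_{\bar j}=\mathsf E_{\bar j}\mathsf E_i$, $\mathsf F_i\mathsf F_{\bar j}=\mathsf F_{\bar j}\mathsf F_i$; for $|i-j|>1$: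 $\mathsf E_i\mathsf E_j=\mathsf E_j\mathsf E_i$, $\mathsf F_i\mathsf F_j=\mathsf F_j\mathsf F_i$, $\mathsf E_{\bar i}\mathsf E_{\bar j}=-\mathsf E_{\bar j}\mathsf E_{\bar i}$, $\mathsf F_{\bar i}\mathsf F_{\bar j}=-\mathsf F_{\bar j}\mathsf F_{\bar i}$; $\mathsf E_i\mathsf E_{i+1}-v\mathsf E_{i+1}\mathsf E_i=\mathsf E_{\bar i}\mathsf E_{\overline{i+1}}+v\mathsf E_{\overline{i+1}}\mathsf E_{\bar i}$, $\mathsf E_i\mathsf E_{\overline{i+1}}-v\mathsf E_{\overline{i+1}}\mathsf E_i=\mathsf E_{\bar i}\mathsf E_{i+1}-v\mathsf E_{i+1}\mathsf E_{\bar i}$, $\mathsf F_i\mathsf F_{i+1}-v\mathsf F_{i+1}\mathsf F_i=-(\mathsf F_{\bar i}\mathsf F_{\overline{i+1}}+v\mathsf F_{\overline{i+1}}\mathsf F_{\bar i})$, $\mathsf F_i\mathsf F_{\overline{i+1}}-v\mathsf F_{\overline{i+1}}\mathsf F_i=\mathsf F_{\bar i}\mathsf F_{i+1}-v\mathsf F_{i+1}\mathsf F_{\bar i}$. (QQ6) for $|i-j|=1$: $\mathsf E_i^2X-(v+v^{-1})\mathsf E_iX\mathsf E_i+X\mathsf E_i^2=0$ for $X\in\{\mathsf E_j,\mathsf E_{\bar j}\}$ and $\mathsf F_i^2Y-(v+v^{-1})\mathsf F_iY\mathsf F_i+Y\mathsf F_i^2=0$ for $Y\in\{\mathsf F_j,\mathsf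 F_{\bar j}\}$. Quantum root vectors: for $1\le i\le n-1$ put $\mathsf E_{i,i+1}=\mathsf E_i$, $\overline{\mathsf E}_{i,i+1}=\mathsf E_{\bar i}$, $\mathsf E_{i+1,i}=\mathsf F_i$, $\overline{\mathsf E}_{i+1,i}=\mathsf F_{\bar i}$, and recursively for $i+1<j\le n$: $\mathsf E_{i,j}=-\mathsf E_{i,j-1}\mathsf E_{j-1}+v^{-1}\mathsf E_{j-1}\mathsf E_{i,j-1}$, $\overline{\mathsf E}_{i,j}=-\mathsf E_{i,j-1}\mathsf E_{\overline{j-1}}+v^{-1}\mathsf E_{\overline{j-1}}\mathsf E_{i,j-1}$, $\mathsf E_{j,i}=-\mathsf F_{j-1}\mathsf E_{j-1,i}+v\mathsf E_{j-1,i}\mathsf F_{j-1}$, $\overline{\mathsf E}_{j,i}=-\mathsf F_{\overline{j-1}}\mathsf E_{j-1,i}+v\mathsf E_{j-1,i}\mathsf F_{\overline{j-1}}$. *)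

theory Defs
  imports Main "HOL-Computational_Algebra.Polynomial"
begin

text \<open>Scalars: a field 'k of characteristic 0 containing an element v that is
transcendental over the rationals (so 'k contains a copy of Q(v)).  An algebra
over 'k is a ring 'a together with a unital ring homomorphism sc from 'k into
the centre of 'a.\<close>

definition transcendental_rat :: "'k::field_char_0 \<Rightarrow> bool" where
  "transcendental_rat v \<longleftrightarrow> (\<forall>p::rat poly. p \<noteq> 0 \<longrightarrow> poly (map_poly of_rat p) v \<noteq> 0)"

definition central_alg_hom :: "('k::field \<Rightarrow> 'a::ring_1) \<Rightarrow> bool" where
  "central_alg_hom sc \<longleftrightarrow> sc 1 = 1 \<and> (\<forall>x y. sc (x + y) = sc x + sc y)
     \<and> (\<forall>x y. sc (x * y) = sc x * sc y) \<and> (\<forall>c a. sc c * a = a * sc c)"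

definition eps_alpha :: "nat \<Rightarrow> nat \<Rightarrow> int" where
  "eps_alpha i j = (if i = j then 1 else 0) - (if i = j + 1 then 1 else 0)"

text \<open>Defining relations (QQ1)-(QQ6) of U_v(q_n). Generators: K i, Ki i (= K_i^{-1}),
Kb i (= K_{bar i}) for 1 \<le> i \<le> n; E j, F j, Eb j, Fb j for 1 \<le> j \<le> n-1.\<close>
definition qq_rels ::
  "('k::field \<Rightarrow> 'a::ring_1) \<Rightarrow> 'k \<Rightarrow> nat \<Rightarrow> (nat \<Rightarrow> 'a) \<Rightarrow> (nat \<Rightarrow> 'a) \<Rightarrow> (nat \<Rightarrow> 'a)
    \<Rightarrow> (nat \<Rightarrow> 'a) \<Rightarrow> (nat \<Rightarrow> 'a) \<Rightarrow> (nat \<Rightarrow> 'a) \<Rightarrow> (nat \<Rightarrow> 'a) \<Rightarrow> bool" where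
  "qq_rels sc v n K Ki Kb E F Eb Fb \<longleftrightarrow>
   (\<forall>i\<in>{1..n}. \<forall>j\<in>{1..n}.
      K i * Ki i = 1 \<and> Ki i * K i = 1 \<and> K i * K j = K j * K i \<and> K i * Kb j = Kb j * K i \<and>
      Kb i * Kb j + Kb j * Kb i =
        (if i = j then sc (2 / (v ^ 2 - (inverse v) ^ 2)) * (K i * K i - Ki i * Ki i) else 0)) \<and>
   (\<forall>i\<in>{1..n}. \<forall>j\<in>{1..n-1}.
      K i * E j = sc (v powi eps_alpha i j) * E j * K i \<and>
      K i * Eb j = sc (v powi eps_alpha i j) * Eb j * K i \<and>
      K i * F j = sc (v powi (- eps_alpha i j)) * F j * K i \<and>
      K i * Fb j = sc (v powi (- eps_alpha i j)) * Fb j * K i) \<and>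
   (\<forall>i\<in>{1..n}.
      (i \<le> n - 1 \<longrightarrow>
         Kb i * E i - sc v * E i * Kb i = Eb i * Ki i \<and>
         Kb i * F i - sc v * F i * Kb i = - (Fb i * K i) \<and>
         Kb i * Eb i + sc v * Eb i * Kb i = E i * Ki i \<and>
         Kb i * Fb i + sc v * Fb i * Kb i = F i * K i) \<and>
      (2 \<le> i \<longrightarrow>
         sc v * Kb i * E (i - 1) - E (i - 1) * Kb i = - (Ki i * Eb (i - 1)) \<and>
         sc v * Kb i * F (i - 1) - F (i - 1) * Kb i = K i * Fb (i - 1) \<and>
         sc v * Kb i * Eb (i - 1) + Eb (i - 1) * Kb i = Ki i * E (i - 1) \<and>
         sc v * Kb i * Fb (i - 1) + Fb (i - 1) * Kb i = K i * F (i - 1)) \<and>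
      (\<forall>j\<in>{1..n-1}. j \<noteq> i \<and> j + 1 \<noteq> i \<longrightarrow>
         Kb i * E j = E j * Kb i \<and> Kb i * F j = F j * Kb i \<and>
         Kb i * Eb j = - (Eb j * Kb i) \<and> Kb i * Fb j = - (Fb j * Kb i))) \<and>
   (\<forall>i\<in>{1..n-1}. \<forall>j\<in>{1..n-1}.
      E i * F j - F j * E i =
        (if i = j then sc (1 / (v - inverse v)) * (K i * Ki (i + 1) - Ki i * K (i + 1)) else 0) \<and>
      Eb i * Fb j + Fb j * Eb i =
        (if i = j then sc (1 / (v - inverse v)) * (K i * K (i + 1) - Ki i * Ki (i + 1))
                       + sc (v - inverse v) * Kb i * Kb (i + 1) else 0) \<and>
      E i * Fb j - Fb j * E i =
        (if i = j then Ki (i + 1) * Kb i - Kb (i + 1) * Ki i else 0) \<and>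
      Eb i * F j - F j * Eb i =
        (if i = j then K (i + 1) * Kb i - Kb (i + 1) * K i else 0)) \<and>
   (\<forall>i\<in>{1..n-1}.
      Eb i * Eb i = - (sc ((v - inverse v) / (v + inverse v)) * (E i * E i)) \<and>
      Fb i * Fb i = sc ((v - inverse v) / (v + inverse v)) * (F i * F i)) \<and>
   (\<forall>i\<in>{1..n-1}. \<forall>j\<in>{1..n-1}. i + 1 \<noteq> j \<and> j + 1 \<noteq> i \<longrightarrow>
      E i * Eb j = Eb j * E i \<and> F i * Fb j = Fb j * F i) \<and>
   (\<forall>i\<in>{1..n-1}. \<forall>j\<in>{1..n-1}. i + 1 < j \<or> j + 1 < i \<longrightarrow>
      E i * E j = E j * E i \<and> F i * F j = F j * F i \<and>
      Eb i * Eb j = - (Eb j * Eb i) \<and> Fb i * Fb j = - (Fb j * Fb i)) \<and>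
   (\<forall>i\<in>{1..n-1}. i + 1 \<le> n - 1 \<longrightarrow>
      E i * E (i + 1) - sc v * E (i + 1) * E i = Eb i * Eb (i + 1) + sc v * Eb (i + 1) * Eb i \<and>
      E i * Eb (i + 1) - sc v * Eb (i + 1) * E i = Eb i * E (i + 1) - sc v * E (i + 1) * Eb i \<and>
      F i * F (i + 1) - sc v * F (i + 1) * F i = - (Fb i * Fb (i + 1) + sc v * Fb (i + 1) * Fb i) \<and>
      F i * Fb (i + 1) - sc v * Fb (i + 1) * F i = Fb i * F (i + 1) - sc v * F (i + 1) * Fb i) \<and>
   (\<forall>i\<in>{1..n-1}. \<forall>j\<in>{1..n-1}. i + 1 = j \<or> j + 1 = i \<longrightarrow>
      (\<forall>X\<in>{E j, Eb j}. E i * E i * X - sc (v + inverse v) * E i * X * E i + X * E i * E i = 0) \<and>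
      (\<forall>Y\<in>{F j, Fb j}. F i * F i * Y - sc (v + inverse v) * F i * Y * F i + Y * F i * F i = 0))"

text \<open>Quantum root vectors. Erv sc v E i d = E_{i,i+d+1},
 Ebrv sc v E Eb i d = bar E_{i,i+d+1}.\<close>
primrec Erv :: "('k::field \<Rightarrow> 'a::ring_1) \<Rightarrow> 'k \<Rightarrow> (nat \<Rightarrow> 'a) \<Rightarrow> nat \<Rightarrow> nat \<Rightarrow> 'a" where
  "Erv sc v E i 0 = E i"
| "Erv sc v E i (Suc d) = - (Erv sc v E i d * E (i + d + 1)) + sc (inverse v) * E (i + d + 1) * Erv sc v E i d"

primrec Ebrv :: "('k::field \<Rightarrow> 'a::ring_1) \<Rightarrow> 'k \<Rightarrow> (nat \<Rightarrow> 'a) \<Rightarrow> (nat \<Rightarrow> 'a) \<Rightarrow> nat \<Rightarrow> nat \<Rightarrow> 'a" where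
  "Ebrv sc v E Eb i 0 = Eb i"
| "Ebrv sc v E Eb i (Suc d) = - (Erv sc v E i d * Eb (i + d + 1)) + sc (inverse v) * Eb (i + d + 1) * Erv sc v E i d"

definition Eij :: "('k::field \<Rightarrow> 'a::ring_1) \<Rightarrow> 'k \<Rightarrow> (nat \<Rightarrow> 'a) \<Rightarrow> nat \<Rightarrow> nat \<Rightarrow> 'a" where
  "Eij sc v E i j = Erv sc v E i (j - i - 1)"

definition Ebij :: "('k::field \<Rightarrow> 'a::ring_1) \<Rightarrow> 'k \<Rightarrow> (nat \<Rightarrow> 'a) \<Rightarrow> (nat \<Rightarrow> 'a) \<Rightarrow> nat \<Rightarrow> nat \<Rightarrow> 'a" where
  "Ebij sc v E Eb i j = Ebrv sc v E Eb i (j - i - 1)"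

end

theory Submission
  imports Defs
begin

text \<open>Induction on j - i along the recursion E_{i,j} = -E_{i,j-1} E_{j-1} + v^-1 E_{j-1} E_{i,j-1}
and its barred analogue. By (QQ3), K_{bar a} commutes with E_m and anticommutes with E_{bar m}
unless a is m or m + 1, so inside E_{i,j} only the generators E_{a-1} and E_a interact with K_{bar a}.
If a lies outside [i, j] nothing happens; for a = j only E_{j-1} contributes, for a = i only E_i.
For i < a < j both contribute, and their correction terms cancel because the relation (QQ5)
E_{a-1} E_a - v E_a E_{a-1} = E_{bar(a-1)} E_{bar a} + v E_{bar a} E_{bar(a-1)} propagates to
E_{i,a} E_a - v E_a E_{i,a} = bar E_{i,a} E_{bar a} + v E_{bar a} bar E_{i,a}.\<close>

lemma transcendental_rat_nonzero:
  assumes "transcendental_rat v"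
  shows "v \<noteq> 0"
proof
  assume "v = 0"
  have "poly (map_poly of_rat [:0, 1::rat:]) v \<noteq> 0"
    using assms unfolding transcendental_rat_def by (metis one_neq_zero pCons_eq_0_iff)
  with \<open>v = 0\<close> show False by (simp add: map_poly_pCons)
qed

lemma mult_assoc_rewrite:
  fixes a b c y :: "'a::semigroup_mult"
  assumes "a * b = c"
  shows "a * (b * y) = c * y"
  using assms by (simp flip: mult.assoc)

locale qq_algebra =
  fixes sc :: "'k::field_char_0 \<Rightarrow> 'a::ring_1" and v :: 'k and n :: nat
    and K Ki Kb E F Eb Fb :: "nat \<Rightarrow> 'a"
  assumes relations: "qq_rels sc v n K Ki Kb E F Eb Fb"
    and sc_hom: "central_alg_hom sc"
    and v_nonzero: "v \<noteq> 0"
begin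

lemma sc_one: "sc 1 = 1"
  and sc_mult: "sc (x * y) = sc x * sc y"
  and sc_commute: "z * sc c = sc c * z"
  using sc_hom unfolding central_alg_hom_def by metis+

lemma sc_left_commute: "z * (sc c * y) = sc c * (z * y)"
  by (metis mult.assoc sc_commute)

lemma sc_v_inverse_cancel:
  "sc v * sc (inverse v) = 1" "sc (inverse v) * sc v = 1"
  "sc v * (sc (inverse v) * y) = y" "sc (inverse v) * (sc v * y) = y"
  using v_nonzero by (simp_all add: mult.assoc[symmetric] sc_mult[symmetric] sc_one)

abbreviation Er :: "nat \<Rightarrow> nat \<Rightarrow> 'a" where "Er i d \<equiv> Erv sc v E i d"
abbreviation Ebr :: "nat \<Rightarrow> nat \<Rightarrow> 'a" where "Ebr i d \<equiv> Ebrv sc v E Eb i d"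

lemmas sc_central_simps =
  sc_commute[where z = "E k" for k] sc_left_commute[where z = "E k" for k]
  sc_commute[where z = "Eb k" for k] sc_left_commute[where z = "Eb k" for k]
  sc_commute[where z = "Kb k" for k] sc_left_commute[where z = "Kb k" for k]
  sc_commute[where z = "Ki k" for k] sc_left_commute[where z = "Ki k" for k]
  sc_commute[where z = "Er i d" for i d] sc_left_commute[where z = "Er i d" for i d]
  sc_commute[where z = "Ebr i d" for i d] sc_left_commute[where z = "Ebr i d" for i d]

text \<open>Normal form: a sum of right-associated monomials, each with its scalar in front. Scalars are
moved only past generators and root vectors, as the unrestricted commutation rule loops on products of
scalars. An equation a * b = c is applied inside such monomials through its instance of
mult_assoc_rewrite.\<close>
lemmas monomial_simps = mult.assoc ring_distribs mult_minus_right mult_minus_left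
  minus_add_distrib minus_minus diff_conv_add_uminus sc_central_simps sc_v_inverse_cancel

lemma inverse_commute_scaled:
  assumes "Y * X = 1" "X * Y = 1" "X * Z = sc e * Z * X" "e \<noteq> 0"
  shows "Y * Z = sc (inverse e) * (Z * Y)"
proof -
  have "sc (inverse e) * sc e = 1"
    using \<open>e \<noteq> 0\<close> by (simp add: sc_mult[symmetric] sc_one)
  then have ZX: "Z * X = sc (inverse e) * (X * Z)"
    by (simp add: assms(3) mult.assoc[symmetric])
  have "Y * Z = Y * (Z * X) * Y"
    using assms(1,2) by (simp add: mult.assoc)
  also have "\<dots> = sc (inverse e) * ((Y * X) * Z * Y)"
    unfolding ZX sc_left_commute by (simp only: mult.assoc)
  also have "\<dots> = sc (inverse e) * (Z * Y)"
    using assms(1) by simp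
  finally show ?thesis .
qed

lemmas qq_rels_unfolded = relations[unfolded qq_rels_def]
lemmas QQ1 = qq_rels_unfolded[THEN conjunct1]
lemmas QQ2 = qq_rels_unfolded[THEN conjunct2, THEN conjunct1]
lemmas QQ3 = qq_rels_unfolded[THEN conjunct2, THEN conjunct2, THEN conjunct1]
lemmas QQ5_E_Eb_far = qq_rels_unfolded[THEN conjunct2, THEN conjunct2, THEN conjunct2,
  THEN conjunct2, THEN conjunct2, THEN conjunct1]
lemmas QQ5_E_E_far = qq_rels_unfolded[THEN conjunct2, THEN conjunct2, THEN conjunct2,
  THEN conjunct2, THEN conjunct2, THEN conjunct2, THEN conjunct1]
lemmas QQ5_E_E_Suc = qq_rels_unfolded[THEN conjunct2, THEN conjunct2, THEN conjunct2,
  THEN conjunct2, THEN conjunct2, THEN conjunct2, THEN conjunct2, THEN conjunct1]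

lemma K_Ki_inverse:
  assumes "1 \<le> k" "k \<le> n"
  shows "Ki k * K k = 1" "K k * Ki k = 1"
  using QQ1 assms by auto

lemma K_E_commute:
  assumes "1 \<le> k" "k \<le> n" "1 \<le> m" "m < n"
  shows "K k * E m = sc (v powi eps_alpha k m) * E m * K k"
    "K k * Eb m = sc (v powi eps_alpha k m) * Eb m * K k"
  using QQ2 assms by auto

lemma Ki_E_commute:
  assumes "1 \<le> k" "k \<le> n" "1 \<le> m" "m < n"
  shows "Ki k * E m = sc (inverse (v powi eps_alpha k m)) * (E m * Ki k)"
    "Ki k * Eb m = sc (inverse (v powi eps_alpha k m)) * (Eb m * Ki k)"
  using inverse_commute_scaled[OF K_Ki_inverse K_E_commute(1)]
    inverse_commute_scaled[OF K_Ki_inverse K_E_commute(2)] assms v_nonzero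
  by simp_all

lemma Ki_E_far:
  assumes "1 \<le> k" "k \<le> n" "1 \<le> m" "m < n" "k \<noteq> m" "k \<noteq> m + 1"
  shows "Ki k * E m = E m * Ki k" "Ki k * Eb m = Eb m * Ki k"
  using Ki_E_commute[OF assms(1-4)] assms(5,6) by (simp_all add: eps_alpha_def sc_one)

lemma Ki_E_same:
  assumes "1 \<le> m" "m < n"
  shows "Ki m * E m = sc (inverse v) * (E m * Ki m)"
    "Ki m * Eb m = sc (inverse v) * (Eb m * Ki m)"
  using Ki_E_commute[of m m] assms by (simp_all add: eps_alpha_def)

lemma Ki_Suc_E:
  assumes "1 \<le> m" "m < n"
  shows "Ki (m + 1) * E m = sc v * (E m * Ki (m + 1))"
    "Ki (m + 1) * Eb m = sc v * (Eb m * Ki (m + 1))"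
  using Ki_E_commute[of "m + 1" m] assms by (simp_all add: eps_alpha_def power_int_minus)

lemma Kb_E_same:
  assumes "1 \<le> m" "m < n"
  shows "Kb m * E m = sc v * (E m * Kb m) + Eb m * Ki m"
    "Kb m * Eb m = E m * Ki m - sc v * (Eb m * Kb m)"
proof -
  have "Kb m * E m - sc v * E m * Kb m = Eb m * Ki m"
    "Kb m * Eb m + sc v * Eb m * Kb m = E m * Ki m"
    using QQ3 assms by auto
  then show "Kb m * E m = sc v * (E m * Kb m) + Eb m * Ki m"
    "Kb m * Eb m = E m * Ki m - sc v * (Eb m * Kb m)"
    by (simp_all add: mult.assoc algebra_simps)
qed

lemma Kb_Suc_E:
  assumes "1 \<le> m" "m < n"
  shows "Kb (m + 1) * E m = sc (inverse v) * (E m * Kb (m + 1)) - Eb m * Ki (m + 1)"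
    "Kb (m + 1) * Eb m = E m * Ki (m + 1) - sc (inverse v) * (Eb m * Kb (m + 1))"
proof -
  have "sc v * Kb (m + 1) * E m - E m * Kb (m + 1) = - (Ki (m + 1) * Eb m)"
    "sc v * Kb (m + 1) * Eb m + Eb m * Kb (m + 1) = Ki (m + 1) * E m"
    using bspec[OF QQ3, of "m + 1"] assms by auto
  then have "sc v * (Kb (m + 1) * E m) = E m * Kb (m + 1) - sc v * (Eb m * Ki (m + 1))"
    "sc v * (Kb (m + 1) * Eb m) = sc v * (E m * Ki (m + 1)) - Eb m * Kb (m + 1)"
    using Ki_Suc_E[OF assms] by (simp_all add: mult.assoc algebra_simps)
  then have "sc (inverse v) * (sc v * (Kb (m + 1) * E m))
      = sc (inverse v) * (E m * Kb (m + 1) - sc v * (Eb m * Ki (m + 1)))"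
    "sc (inverse v) * (sc v * (Kb (m + 1) * Eb m))
      = sc (inverse v) * (sc v * (E m * Ki (m + 1)) - Eb m * Kb (m + 1))"
    by simp_all
  then show "Kb (m + 1) * E m = sc (inverse v) * (E m * Kb (m + 1)) - Eb m * Ki (m + 1)"
    "Kb (m + 1) * Eb m = E m * Ki (m + 1) - sc (inverse v) * (Eb m * Kb (m + 1))"
    by (simp_all add: sc_v_inverse_cancel right_diff_distrib)
qed

lemma Kb_E_far:
  assumes "1 \<le> k" "k \<le> n" "1 \<le> m" "m < n" "k \<noteq> m" "k \<noteq> m + 1"
  shows "Kb k * E m = E m * Kb k" "Kb k * Eb m = - (Eb m * Kb k)"
  using QQ3 assms by auto

lemma E_E_Suc:
  assumes "1 \<le> m" "m + 1 < n"
  shows "E m * E (m + 1) - sc v * (E (m + 1) * E m)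
      = Eb m * Eb (m + 1) + sc v * (Eb (m + 1) * Eb m)"
    "E m * Eb (m + 1) - sc v * (Eb (m + 1) * E m)
      = Eb m * E (m + 1) - sc v * (E (m + 1) * Eb m)"
  using QQ5_E_E_Suc assms by (auto simp: mult.assoc)

lemma E_Eb_commute_far:
  assumes "1 \<le> p" "p < n" "1 \<le> q" "q < n" "p + 1 \<noteq> q" "q + 1 \<noteq> p"
  shows "E p * Eb q = Eb q * E p"
  using QQ5_E_Eb_far assms by auto

lemma E_E_commute_far:
  assumes "1 \<le> p" "p < n" "1 \<le> q" "q < n" "p + 1 < q \<or> q + 1 < p"
  shows "E p * E q = E q * E p" "Eb p * Eb q = - (Eb q * Eb p)"
proof -
  have "p \<in> {1..n-1}" "q \<in> {1..n-1}"
    using assms by auto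
  then show "E p * E q = E q * E p" "Eb p * Eb q = - (Eb q * Eb p)"
    using QQ5_E_E_far assms(5) by blast+
qed

lemma Er_Suc:
  assumes "m = i + d + 1"
  shows "Er i (Suc d) = - (Er i d * E m) + sc (inverse v) * (E m * Er i d)"
    "Ebr i (Suc d) = - (Er i d * Eb m) + sc (inverse v) * (Eb m * Er i d)"
  using assms by (simp_all add: mult.assoc)

lemma Kb_Er_outside:
  assumes "1 \<le> i" "i + d + 1 \<le> n" "1 \<le> k" "k \<le> n" "k < i \<or> i + d + 1 < k"
  shows "Kb k * Er i d = Er i d * Kb k \<and> Kb k * Ebr i d = - (Ebr i d * Kb k)"
  using assms
proof (induction d)
  case 0
  then show ?case using Kb_E_far[of k i] by auto
next
  case (Suc d)
  define m where "m = i + d + 1"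
  have IH: "Kb k * Er i d = Er i d * Kb k" using Suc by auto
  have gen: "Kb k * E m = E m * Kb k" "Kb k * Eb m = - (Eb m * Kb k)"
    using Kb_E_far[of k m] Suc.prems m_def by auto
  show ?case unfolding Er_Suc[OF m_def]
    by (simp only: monomial_simps IH IH[THEN mult_assoc_rewrite] gen gen[THEN mult_assoc_rewrite])
qed

lemma Ki_Er_outside:
  assumes "1 \<le> i" "i + d + 1 \<le> n" "1 \<le> k" "k \<le> n" "k < i \<or> i + d + 1 < k"
  shows "Ki k * Er i d = Er i d * Ki k \<and> Ki k * Ebr i d = Ebr i d * Ki k"
  using assms
proof (induction d)
  case 0
  then show ?case using Ki_E_far[of k i] by auto
next
  case (Suc d)
  define m where "m = i + d + 1"
  have IH: "Ki k * Er i d = Er i d * Ki k" using Suc by auto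
  have gen: "Ki k * E m = E m * Ki k" "Ki k * Eb m = Eb m * Ki k"
    using Ki_E_far[of k m] Suc.prems m_def by auto
  show ?case unfolding Er_Suc[OF m_def]
    by (simp only: monomial_simps IH IH[THEN mult_assoc_rewrite] gen gen[THEN mult_assoc_rewrite])
qed

lemma Ki_Er_last:
  assumes "1 \<le> i" "k = i + d + 1" "k \<le> n"
  shows "Ki k * Er i d = sc v * (Er i d * Ki k) \<and> Ki k * Ebr i d = sc v * (Ebr i d * Ki k)"
proof (cases d)
  case 0
  then show ?thesis using Ki_Suc_E[of i] assms by auto
next
  case (Suc d')
  define m where "m = i + d' + 1"
  have prev: "Ki k * Er i d' = Er i d' * Ki k"
    using Ki_Er_outside[of i d' k] assms Suc by auto
  have gen: "Ki k * E m = sc v * (E m * Ki k)" "Ki k * Eb m = sc v * (Eb m * Ki k)"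
    using Ki_Suc_E[of m] assms Suc m_def by auto
  show ?thesis unfolding Suc Er_Suc[OF m_def]
    by (simp only: monomial_simps prev prev[THEN mult_assoc_rewrite] gen gen[THEN mult_assoc_rewrite])
qed

lemma E_Er_commute_beyond:
  assumes "1 \<le> i" "i + d + 1 < k" "k < n"
  shows "E k * Er i d = Er i d * E k \<and> Eb k * Er i d = Er i d * Eb k"
  using assms
proof (induction d)
  case 0
  then show ?case using E_E_commute_far[of k i] E_Eb_commute_far[of i k] by auto
next
  case (Suc d)
  define m where "m = i + d + 1"
  have IH: "E k * Er i d = Er i d * E k" "Eb k * Er i d = Er i d * Eb k" using Suc by auto
  have gen: "E k * E m = E m * E k" "Eb k * E m = E m * Eb k"
    using E_E_commute_far[of k m] E_Eb_commute_far[of m k] Suc.prems m_def by auto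
  show ?case unfolding Er_Suc[OF m_def]
    by (simp only: monomial_simps IH IH[THEN mult_assoc_rewrite] gen gen[THEN mult_assoc_rewrite])
qed

lemma Kb_Er_last:
  assumes "1 \<le> i" "k = i + d + 1" "k \<le> n"
  shows "Kb k * Er i d = sc (inverse v) * (Er i d * Kb k) - Ebr i d * Ki k \<and>
         Kb k * Ebr i d = Er i d * Ki k - sc (inverse v) * (Ebr i d * Kb k)"
proof (cases d)
  case 0
  then show ?thesis using Kb_Suc_E[of i] assms by auto
next
  case (Suc d')
  define m where "m = i + d' + 1"
  have prev: "Kb k * Er i d' = Er i d' * Kb k" "Ki k * Er i d' = Er i d' * Ki k"
    using Kb_Er_outside[of i d' k] Ki_Er_outside[of i d' k] assms Suc by auto
  have gen: "Kb k * E m = sc (inverse v) * (E m * Kb k) - Eb m * Ki k"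
    "Kb k * Eb m = E m * Ki k - sc (inverse v) * (Eb m * Kb k)"
    using Kb_Suc_E[of m] assms Suc m_def by auto
  show ?thesis unfolding Suc Er_Suc[OF m_def]
    by (simp only: monomial_simps prev prev[THEN mult_assoc_rewrite] gen gen[THEN mult_assoc_rewrite];
        simp add: add_ac)
qed

lemma Er_E_Suc:
  assumes "1 \<le> i" "a = i + d + 1" "a < n"
  shows "Er i d * E a - sc v * (E a * Er i d) = Ebr i d * Eb a + sc v * (Eb a * Ebr i d) \<and>
    Er i d * Eb a - sc v * (Eb a * Er i d) = Ebr i d * E a - sc v * (E a * Ebr i d)"
proof (cases d)
  case 0
  then show ?thesis using E_E_Suc[of i] assms by auto
next
  case (Suc d')
  define m where "m = i + d' + 1"
  let ?X = "Er i d'"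
  have prev: "E a * ?X = ?X * E a" "Eb a * ?X = ?X * Eb a"
    using E_Er_commute_beyond[of i d' a] assms Suc by auto
  let ?P = "E m * E a - sc v * (E a * E m)" and ?Q = "Eb m * Eb a + sc v * (Eb a * Eb m)"
  let ?P' = "E m * Eb a - sc v * (Eb a * E m)" and ?Q' = "Eb m * E a - sc v * (E a * Eb m)"
  have "?P = ?Q" "?P' = ?Q'"
    using E_E_Suc[of m] assms Suc m_def by auto
  moreover have "Er i d * E a - sc v * (E a * Er i d) = - (?X * ?P) + sc (inverse v) * (?P * ?X)"
    "Ebr i d * Eb a + sc v * (Eb a * Ebr i d) = - (?X * ?Q) + sc (inverse v) * (?Q * ?X)"
    "Er i d * Eb a - sc v * (Eb a * Er i d) = - (?X * ?P') + sc (inverse v) * (?P' * ?X)"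
    "Ebr i d * E a - sc v * (E a * Ebr i d) = - (?X * ?Q') + sc (inverse v) * (?Q' * ?X)"
    unfolding Suc Er_Suc[OF m_def]
    by (simp only: monomial_simps prev prev[THEN mult_assoc_rewrite]; simp add: add_ac)+
  ultimately show ?thesis by simp
qed

lemma Kb_Er_inner:
  assumes "1 \<le> i" "i + d + 1 \<le> n" "i < a" "a < i + d + 1"
  shows "Kb a * Er i d = Er i d * Kb a \<and> Kb a * Ebr i d = - (Ebr i d * Kb a)"
  using assms
proof (induction d)
  case 0
  then show ?case by simp
next
  case (Suc d)
  define m where "m = i + d + 1"
  show ?case
  proof (cases "a = m")
    case False
    then have IH: "Kb a * Er i d = Er i d * Kb a" using Suc m_def by auto
    have gen: "Kb a * E m = E m * Kb a" "Kb a * Eb m = - (Eb m * Kb a)"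
      using Kb_E_far[of a m] False Suc.prems m_def by auto
    show ?thesis unfolding Er_Suc[OF m_def]
      by (simp only: monomial_simps IH IH[THEN mult_assoc_rewrite] gen gen[THEN mult_assoc_rewrite];
          simp add: add_ac)
  next
    case True
    have prev: "Kb a * Er i d = sc (inverse v) * (Er i d * Kb a) - Ebr i d * Ki a"
      "Kb a * Ebr i d = Er i d * Ki a - sc (inverse v) * (Ebr i d * Kb a)"
      "Ki a * Er i d = sc v * (Er i d * Ki a)" "Ki a * Ebr i d = sc v * (Ebr i d * Ki a)"
      using Kb_Er_last[of i a d] Ki_Er_last[of i a d] Suc.prems True m_def by auto
    have gen: "Kb a * E a = sc v * (E a * Kb a) + Eb a * Ki a"
      "Kb a * Eb a = E a * Ki a - sc v * (Eb a * Kb a)"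
      "Ki a * E a = sc (inverse v) * (E a * Ki a)" "Ki a * Eb a = sc (inverse v) * (Eb a * Ki a)"
      using Kb_E_same[of a] Ki_E_same[of a] Suc.prems True m_def by auto
    have "Kb a * Er i (Suc d) = Er i (Suc d) * Kb a + sc (inverse v) *
        ((Ebr i d * E a - sc v * (E a * Ebr i d)) - (Er i d * Eb a - sc v * (Eb a * Er i d))) * Ki a"
      "Kb a * Ebr i (Suc d) = - (Ebr i (Suc d) * Kb a) + sc (inverse v) *
        ((Ebr i d * Eb a + sc v * (Eb a * Ebr i d)) - (Er i d * E a - sc v * (E a * Er i d))) * Ki a"
      unfolding Er_Suc[OF m_def] True[symmetric] m_def[symmetric]
      by (simp only: monomial_simps prev prev[THEN mult_assoc_rewrite]
          gen gen[THEN mult_assoc_rewrite]; simp add: add_ac)+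
    moreover have "Er i d * E a - sc v * (E a * Er i d) = Ebr i d * Eb a + sc v * (Eb a * Ebr i d)"
      "Er i d * Eb a - sc v * (Eb a * Er i d) = Ebr i d * E a - sc v * (E a * Ebr i d)"
      using Er_E_Suc[of i a d] Suc.prems True m_def by auto
    ultimately show ?thesis by simp
  qed
qed

lemma Kb_Er_first:
  assumes "1 \<le> i" "i + d + 2 \<le> n"
  shows "Kb i * Er i (Suc d) = sc v * (Er i (Suc d) * Kb i) - Eb i * (Er (i + 1) d * Ki i)
      + sc (inverse v) * (Er (i + 1) d * (Eb i * Ki i)) \<and>
    Kb i * Ebr i (Suc d) = - (sc v * (Ebr i (Suc d) * Kb i)) - Eb i * (Ebr (i + 1) d * Ki i)
      - sc (inverse v) * (Ebr (i + 1) d * (Eb i * Ki i))"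
  using assms
proof (induction d)
  case 0
  define m where "m = i + 0 + 1"
  have gen: "Kb i * E i = sc v * (E i * Kb i) + Eb i * Ki i"
    "Kb i * Eb i = E i * Ki i - sc v * (Eb i * Kb i)"
    "Kb i * E m = E m * Kb i" "Kb i * Eb m = - (Eb m * Kb i)"
    "Ki i * E m = E m * Ki i" "Ki i * Eb m = Eb m * Ki i"
    using Kb_E_same[of i] Kb_E_far[of i m] Ki_E_far[of i m] 0 m_def by auto
  have "Er (i + 1) 0 = E m" "Ebr (i + 1) 0 = Eb m"
    using m_def by simp_all
  then show ?case unfolding Er_Suc[OF m_def]
    by (simp only: monomial_simps gen gen[THEN mult_assoc_rewrite] Erv.simps(1) Ebrv.simps(1);
        simp add: add_ac)
next
  case (Suc d)
  define m where "m = i + Suc d + 1"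
  have m': "m = (i + 1) + d + 1" using m_def by simp
  have IH: "Kb i * Er i (Suc d) = sc v * (Er i (Suc d) * Kb i) - Eb i * (Er (i + 1) d * Ki i)
      + sc (inverse v) * (Er (i + 1) d * (Eb i * Ki i))"
    using Suc by auto
  have gen: "Kb i * E m = E m * Kb i" "Kb i * Eb m = - (Eb m * Kb i)"
    "Ki i * E m = E m * Ki i" "Ki i * Eb m = Eb m * Ki i"
    "E m * Eb i = Eb i * E m" "Eb m * Eb i = - (Eb i * Eb m)"
    using Kb_E_far[of i m] Ki_E_far[of i m] E_Eb_commute_far[of m i] E_E_commute_far[of m i]
      Suc.prems m_def by auto
  show ?case unfolding Er_Suc[OF m_def] Er_Suc[OF m']
    by (simp only: monomial_simps IH IH[THEN mult_assoc_rewrite] gen gen[THEN mult_assoc_rewrite];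
        simp add: add_ac)
qed

lemma Kb_Eij_other:
  assumes "1 \<le> i" "i < j" "j \<le> n" "1 \<le> a" "a \<le> n" "a \<noteq> i" "a \<noteq> j"
  shows "Kb a * Eij sc v E i j = Eij sc v E i j * Kb a \<and>
    Kb a * Ebij sc v E Eb i j = - (Ebij sc v E Eb i j * Kb a)"
proof -
  have j: "j = i + (j - i - 1) + 1" using assms by simp
  show ?thesis
    unfolding Eij_def Ebij_def
    using Kb_Er_inner[of i "j - i - 1" a] Kb_Er_outside[of i "j - i - 1" a] assms
    by (cases "i < a \<and> a < j") (auto simp flip: j)
qed

lemma Kb_Eij_first:
  assumes "1 \<le> i" "i + 1 < j" "j \<le> n"
  shows "Kb i * Eij sc v E i j = sc v * Eij sc v E i j * Kb i - Eb i * Eij sc v E (i + 1) j * Ki i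
      + sc (inverse v) * Eij sc v E (i + 1) j * Eb i * Ki i \<and>
    Kb i * Ebij sc v E Eb i j = - (sc v * Ebij sc v E Eb i j * Kb i)
      - Eb i * Ebij sc v E Eb (i + 1) j * Ki i
      - sc (inverse v) * Ebij sc v E Eb (i + 1) j * Eb i * Ki i"
proof -
  have "j - i - 1 = Suc (j - (i + 1) - 1)" using assms by simp
  then show ?thesis
    unfolding Eij_def Ebij_def using Kb_Er_first[of i "j - (i + 1) - 1"] assms
    by (simp add: mult.assoc)
qed

lemma Kb_Eij_last:
  assumes "1 \<le> i" "i < j" "j \<le> n"
  shows "Kb j * Eij sc v E i j = sc (inverse v) * Eij sc v E i j * Kb j - Ebij sc v E Eb i j * Ki j \<and>
    Kb j * Ebij sc v E Eb i j = - (sc (inverse v) * Ebij sc v E Eb i j * Kb j) + Eij sc v E i j * Ki j"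
  unfolding Eij_def Ebij_def using Kb_Er_last[of i j "j - i - 1"] assms
  by (simp add: mult.assoc)

end

theorem lemma2p7:
  fixes sc :: "'k::field_char_0 \<Rightarrow> 'a::ring_1" and v :: 'k and n :: nat
    and K Ki Kb E F Eb Fb :: "nat \<Rightarrow> 'a" and i j a :: nat
  assumes "transcendental_rat v"
    and "central_alg_hom sc"
    and "qq_rels sc v n K Ki Kb E F Eb Fb"
    and "1 \<le> i" "i < j" "j \<le> n" "1 \<le> a" "a \<le> n"
  shows
   "((a < i \<or> (i < a \<and> a < j) \<or> j < a) \<longrightarrow>
       Kb a * Eij sc v E i j = Eij sc v E i j * Kb a \<and>
       Kb a * Ebij sc v E Eb i j = - (Ebij sc v E Eb i j * Kb a)) \<and>
    ((a = i \<and> i + 1 < j) \<longrightarrow>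
       Kb a * Eij sc v E i j =
         sc v * Eij sc v E i j * Kb i - Eb i * Eij sc v E (i + 1) j * Ki i
         + sc (inverse v) * Eij sc v E (i + 1) j * Eb i * Ki i \<and>
       Kb a * Ebij sc v E Eb i j =
         - (sc v * Ebij sc v E Eb i j * Kb i) - Eb i * Ebij sc v E Eb (i + 1) j * Ki i
         - sc (inverse v) * Ebij sc v E Eb (i + 1) j * Eb i * Ki i) \<and>
    (a = j \<longrightarrow>
       Kb a * Eij sc v E i j = sc (inverse v) * Eij sc v E i j * Kb j - Ebij sc v E Eb i j * Ki j \<and>
       Kb a * Ebij sc v E Eb i j = - (sc (inverse v) * Ebij sc v E Eb i j * Kb j) + Eij sc v E i j * Ki j)"
proof -
  interpret qq_algebra sc v n K Ki Kb E F Eb Fb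
    using assms(2,3) transcendental_rat_nonzero[OF assms(1)] by unfold_locales
  show ?thesis
    using Kb_Eij_other[of i j a] Kb_Eij_first[of i j] Kb_Eij_last[of i j] assms(4-8)
    by (intro conjI impI) auto
qed

end
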